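(* Let $p$ be prime, $n\ge1$, $G=G(p,n)$ the Heisenberg group acting on $X=\mathbb{Z}_p^{n+2}$ by matrix–vector multiplication with permutation representation $V=\mathbb{C}^X$, and let $H=\{(0,0,z):z\in\mathbb{Z}_p\}$ be the center of $G$. Then the coset identification problem for $H$ (given oracle access to the permutation matrix of an unknown $a=(x,y,z)\in G$, determine the coset $aH$, i.e. determine $x$ and $y$) can be solved by a single-query quantum algorithm with success probability $1$.
   Context: $G(p,n)$ is the group of $(n+2)\times(n+2)$ matrices over $\mathbb{Z}_p$ with $1$'s on the diagonal whose only other nonzero entries lie in the first row and last column, identified with triples $(x,y,z)$, $x,y\in\mathbb{Z}_p^n$, $z\in\mathbb{Z}_p$, where $(1,x,z)$ is the first row and $(z,y,1)^T$ the last column. A single-query algorithm consists of $N\ge1$, a unit vector $\psi\in V\otimes\mathbb{C}^N$, a unitary $U_1$ and a POVM indexed by the cosets of $H$; it succeeds with probability $\frac1{|G|}\sum_a\langle\psi_a|E_{aH}|\psi_a\rangle$ where $\psi_a=U_1(\pi(a)\otimes I)\psi$. *)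

theory Defs
  imports Complex_Main "HOL-Computational_Algebra.Primes"
begin

text \<open>Vectors in Z_p^m: functions nat => int with entries in {0..<p} on indices < m
  and zero elsewhere (so the representation is canonical).\<close>
definition Zp_vecs :: "nat \<Rightarrow> nat \<Rightarrow> (nat \<Rightarrow> int) set" where
  "Zp_vecs p m = {v. (\<forall>i<m. v i \<in> {0..<int p}) \<and> (\<forall>i\<ge>m. v i = 0)}"

definition heis_X :: "nat \<Rightarrow> nat \<Rightarrow> (nat \<Rightarrow> int) set" where
  "heis_X p n = Zp_vecs p (n + 2)"

type_synonym heis_elt = "(nat \<Rightarrow> int) \<times> (nat \<Rightarrow> int) \<times> int"

definition heis_group :: "nat \<Rightarrow> nat \<Rightarrow> heis_elt set" where
  "heis_group p n = {(x, y, z). x \<in> Zp_vecs p n \<and> y \<in> Zp_vecs p n \<and> z \<in> {0..<int p}}"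

fun heis_mat :: "nat \<Rightarrow> heis_elt \<Rightarrow> nat \<Rightarrow> nat \<Rightarrow> int" where
  "heis_mat n (x, y, z) i j =
     (if i = j then 1
      else if i = 0 \<and> 1 \<le> j \<and> j \<le> n then x (j - 1)
      else if i = 0 \<and> j = n + 1 then z
      else if 1 \<le> i \<and> i \<le> n \<and> j = n + 1 then y (i - 1)
      else 0)"

definition heis_act :: "nat \<Rightarrow> nat \<Rightarrow> heis_elt \<Rightarrow> (nat \<Rightarrow> int) \<Rightarrow> (nat \<Rightarrow> int)" where
  "heis_act p n a v = (\<lambda>i. if i < n + 2 then (\<Sum>j<n + 2. heis_mat n a i j * v j) mod int p else 0)"

text \<open>Group law (matrix multiplication) on triples:
  (x,y,z)(x',y',z') = (x+x', y+y', z+z'+x.y').\<close>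
fun heis_mult :: "nat \<Rightarrow> nat \<Rightarrow> heis_elt \<Rightarrow> heis_elt \<Rightarrow> heis_elt" where
  "heis_mult p n (x, y, z) (x', y', z') =
     ((\<lambda>i. if i < n then (x i + x' i) mod int p else 0),
      (\<lambda>i. if i < n then (y i + y' i) mod int p else 0),
      (z + z' + (\<Sum>i<n. x i * y' i)) mod int p)"

definition heis_center :: "nat \<Rightarrow> nat \<Rightarrow> heis_elt set" where
  "heis_center p n = {((\<lambda>_. 0), (\<lambda>_. 0), z) | z. z \<in> {0..<int p}}"

definition heis_coset :: "nat \<Rightarrow> nat \<Rightarrow> heis_elt \<Rightarrow> heis_elt set" where
  "heis_coset p n a = heis_mult p n a ` heis_center p n"

definition heis_cosets :: "nat \<Rightarrow> nat \<Rightarrow> heis_elt set set" where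
  "heis_cosets p n = heis_coset p n ` heis_group p n"

text \<open>Finite-dimensional linear algebra on C^S, with vectors as functions S => complex
  and operators as matrices S => S => complex (only entries on S matter).\<close>
definition apply_op :: "'s set \<Rightarrow> ('s \<Rightarrow> 's \<Rightarrow> complex) \<Rightarrow> ('s \<Rightarrow> complex) \<Rightarrow> ('s \<Rightarrow> complex)" where
  "apply_op S M f = (\<lambda>s. \<Sum>t\<in>S. M s t * f t)"

definition inner_c :: "'s set \<Rightarrow> ('s \<Rightarrow> complex) \<Rightarrow> ('s \<Rightarrow> complex) \<Rightarrow> complex" where
  "inner_c S f g = (\<Sum>s\<in>S. cnj (f s) * g s)"

definition is_unit_vec :: "'s set \<Rightarrow> ('s \<Rightarrow> complex) \<Rightarrow> bool" where
  "is_unit_vec S f \<longleftrightarrow> inner_c S f f = 1"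

definition is_unitary :: "'s set \<Rightarrow> ('s \<Rightarrow> 's \<Rightarrow> complex) \<Rightarrow> bool" where
  "is_unitary S U \<longleftrightarrow> (\<forall>s\<in>S. \<forall>t\<in>S. (\<Sum>k\<in>S. cnj (U k s) * U k t) = (if s = t then 1 else 0))"

definition is_psd :: "'s set \<Rightarrow> ('s \<Rightarrow> 's \<Rightarrow> complex) \<Rightarrow> bool" where
  "is_psd S E \<longleftrightarrow> (\<forall>f. Im (inner_c S f (apply_op S E f)) = 0 \<and> Re (inner_c S f (apply_op S E f)) \<ge> 0)"

definition is_povm :: "'s set \<Rightarrow> 'c set \<Rightarrow> ('c \<Rightarrow> 's \<Rightarrow> 's \<Rightarrow> complex) \<Rightarrow> bool" where
  "is_povm S C E \<longleftrightarrow> (\<forall>c\<in>C. is_psd S (E c)) \<and>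
     (\<forall>s\<in>S. \<forall>t\<in>S. (\<Sum>c\<in>C. E c s t) = (if s = t then 1 else 0))"

definition perm_rep :: "nat \<Rightarrow> nat \<Rightarrow> heis_elt \<Rightarrow> (nat \<Rightarrow> int) \<Rightarrow> (nat \<Rightarrow> int) \<Rightarrow> complex" where
  "perm_rep p n a w v = (if w = heis_act p n a v then 1 else 0)"

text \<open>pi(a) tensor I_N acting on V tensor C^N, basis indexed by X x {0..<N}.\<close>
definition perm_rep_ext :: "nat \<Rightarrow> nat \<Rightarrow> heis_elt \<Rightarrow>
    ((nat \<Rightarrow> int) \<times> nat) \<Rightarrow> ((nat \<Rightarrow> int) \<times> nat) \<Rightarrow> complex" where
  "perm_rep_ext p n a s t = perm_rep p n a (fst s) (fst t) * (if snd s = snd t then 1 else 0)"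

definition tensor_space :: "nat \<Rightarrow> nat \<Rightarrow> nat \<Rightarrow> ((nat \<Rightarrow> int) \<times> nat) set" where
  "tensor_space p n N = heis_X p n \<times> {..<N}"

definition success_prob :: "nat \<Rightarrow> nat \<Rightarrow> nat \<Rightarrow> ((nat \<Rightarrow> int) \<times> nat \<Rightarrow> complex) \<Rightarrow>
    ((nat \<Rightarrow> int) \<times> nat \<Rightarrow> (nat \<Rightarrow> int) \<times> nat \<Rightarrow> complex) \<Rightarrow>
    (heis_elt set \<Rightarrow> (nat \<Rightarrow> int) \<times> nat \<Rightarrow> (nat \<Rightarrow> int) \<times> nat \<Rightarrow> complex) \<Rightarrow> complex" where
  "success_prob p n N psi U E =
     (let S = tensor_space p n N;
          psi_a = (\<lambda>a. apply_op S U (apply_op S (perm_rep_ext p n a) psi))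
      in (1 / of_nat (card (heis_group p n))) *
         (\<Sum>a\<in>heis_group p n. inner_c S (psi_a a) (apply_op S (E (heis_coset p n a)) (psi_a a))))"

end

theory Submission
  imports Defs
begin

text \<open>Write \<omega> = exp(2\<pi>i/p) and v' = (v_1, ..., v_n) for the middle coordinates of
  v \<in> Z_p^(n+2). The algorithm queries once with \<psi> = p^(-(n+1)/2) \<Sum>_u \<omega>^(u_0) |u\<rangle>|u'\<rangle>, summed over
  the u with u_(n+1) = 1, and applies no unitary after the query. For a = (x, y, z) the ancilla of
  (\<pi>(a) \<otimes> I) \<psi> at |v\<rangle> holds v' - y and the phase is \<omega>^(v_0 - x \<cdot> (v' - y) - z). Hence
  \<langle>\<psi>_(x,y,z), \<psi>_(x',y',z')\<rangle> vanishes unless y = y', and is then \<omega>^(z - z') times a character sum of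
  Z_p^n that vanishes unless x = x'. The states of one coset of the centre thus agree up to a phase,
  those of distinct cosets are orthogonal, and measuring along one representative state per coset
  identifies the coset with certainty.\<close>

definition unit_root :: "nat \<Rightarrow> int \<Rightarrow> complex" where
  "unit_root p k = cis (2 * pi * of_int k / of_nat p)"

lemma unit_root_0 [simp]: "unit_root p 0 = 1"
  by (simp add: unit_root_def)

lemma unit_root_add: "unit_root p (a + b) = unit_root p a * unit_root p b"
  by (simp add: unit_root_def cis_mult distrib_left add_divide_distrib)

lemma cnj_unit_root: "cnj (unit_root p k) = unit_root p (- k)"
  by (simp add: unit_root_def cis_cnj)

lemma cnj_unit_root_mult_self: "cnj (unit_root p k) * unit_root p k = 1"
  by (simp add: cnj_unit_root unit_root_add [symmetric])

lemma unit_root_power: "unit_root p d ^ i = unit_root p (d * int i)"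
  by (simp add: unit_root_def DeMoivre algebra_simps)

lemma unit_root_sum: "unit_root p (\<Sum>i<(m::nat). f i) = (\<Prod>i<m. unit_root p (f i))"
  by (induction m) (simp_all add: unit_root_add)

lemma unit_root_eq_1_iff:
  assumes "p > 0"
  shows "unit_root p d = 1 \<longleftrightarrow> int p dvd d"
proof
  assume "unit_root p d = 1"
  then have "cos (2 * pi * of_int d / of_nat p) = 1"
    unfolding unit_root_def by (metis cis.sel(1) one_complex.sel(1))
  then obtain m :: int where "2 * pi * of_int d / of_nat p = of_int m * 2 * pi"
    using cos_one_2pi_int by blast
  then have "real_of_int d = of_int m * of_nat p"
    using assms by (simp add: field_simps)
  then have "d = m * int p"
    by (metis of_int_eq_iff of_int_mult of_int_of_nat_eq)
  then show "int p dvd d" by simp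
next
  assume "int p dvd d"
  then obtain m where "d = int p * m" by blast
  then have "2 * pi * of_int d / of_nat p = 2 * pi * of_int m"
    using assms by simp
  then show "unit_root p d = 1"
    unfolding unit_root_def by simp
qed

lemma unit_root_mod:
  assumes "p > 0"
  shows "unit_root p (k mod int p) = unit_root p k"
proof -
  have "unit_root p k = unit_root p (k mod int p) * unit_root p (int p * (k div int p))"
    by (metis unit_root_add mod_mult_div_eq add.commute)
  then show ?thesis
    using unit_root_eq_1_iff [OF assms] by simp
qed

lemma sum_unit_root_multiples:
  assumes "p > 0"
  shows "(\<Sum>t\<in>{0..<int p}. unit_root p (d * t)) = (if int p dvd d then of_nat p else 0)"
proof -
  have "{0..<int p} = int ` {..<p}"
    by (metis atLeast0LessThan image_int_atLeastLessThan of_nat_0)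
  then have "(\<Sum>t\<in>{0..<int p}. unit_root p (d * t)) = (\<Sum>i<p. unit_root p d ^ i)"
    by (simp add: sum.reindex unit_root_power)
  also have "\<dots> = (if int p dvd d then of_nat p else 0)"
  proof (cases "int p dvd d")
    case True
    then have "unit_root p d = 1"
      using unit_root_eq_1_iff [OF assms] by blast
    with True show ?thesis
      by simp
  next
    case False
    have "unit_root p d ^ p = 1"
      using unit_root_eq_1_iff [OF assms] by (simp add: unit_root_power)
    moreover have "unit_root p d \<noteq> 1"
      using False unit_root_eq_1_iff [OF assms] by blast
    ultimately show ?thesis
      using False by (simp add: sum_gp_strict)
  qed
  finally show ?thesis .
qed

lemma sum_unit_root_shifted:
  assumes "p > 0" and "\<bar>d\<bar> < int p"
  shows "(\<Sum>t\<in>{0..<int p}. unit_root p (d * ((t - c) mod int p))) = (if d = 0 then of_nat p else 0)"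
proof -
  have "unit_root p (d * ((t - c) mod int p)) = unit_root p (- (d * c)) * unit_root p (d * t)" for t
  proof -
    have "unit_root p (d * ((t - c) mod int p)) = unit_root p (d * (t - c))"
      by (metis unit_root_mod [OF assms(1)] mod_mult_right_eq)
    also have "\<dots> = unit_root p (- (d * c) + d * t)"
      by (simp add: algebra_simps)
    finally show ?thesis
      by (simp only: unit_root_add)
  qed
  then have "(\<Sum>t\<in>{0..<int p}. unit_root p (d * ((t - c) mod int p)))
      = unit_root p (- (d * c)) * (\<Sum>t\<in>{0..<int p}. unit_root p (d * t))"
    by (simp add: sum_distrib_left)
  moreover have "int p dvd d \<longleftrightarrow> d = 0"
  proof
    assume "int p dvd d"
    then show "d = 0"
      using assms(2) dvd_imp_le_int [of d "int p"] by linarith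
  qed simp
  ultimately show ?thesis
    by (simp add: sum_unit_root_multiples [OF assms(1)])
qed

lemma Zp_vecs_0: "Zp_vecs p 0 = {\<lambda>_. 0}"
  by (auto simp: Zp_vecs_def)

lemma zero_in_Zp_vecs: "p > 0 \<Longrightarrow> (\<lambda>_. 0) \<in> Zp_vecs p m"
  by (simp add: Zp_vecs_def)

lemma Zp_vecs_eq_iff:
  "v \<in> Zp_vecs p m \<Longrightarrow> w \<in> Zp_vecs p m \<Longrightarrow> v = w \<longleftrightarrow> (\<forall>i<m. v i = w i)"
  unfolding Zp_vecs_def by (auto intro!: ext) (metis linorder_not_le)

lemma Zp_vecs_Suc: "Zp_vecs p (Suc m) = (\<lambda>(v, c). v(m := c)) ` (Zp_vecs p m \<times> {0..<int p})"
proof (intro set_eqI iffI)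
  fix w assume "w \<in> Zp_vecs p (Suc m)"
  then have "(w(m := 0), w m) \<in> Zp_vecs p m \<times> {0..<int p}"
    unfolding Zp_vecs_def by auto
  then show "w \<in> (\<lambda>(v, c). v(m := c)) ` (Zp_vecs p m \<times> {0..<int p})"
    by (rule rev_image_eqI) simp
qed (auto simp: Zp_vecs_def less_Suc_eq)

lemma inj_on_Zp_vecs_Suc: "inj_on (\<lambda>(v, c). v(m := c)) (Zp_vecs p m \<times> {0..<int p})"
proof (intro inj_onI, clarify)
  fix v c v' c'
  assume "v \<in> Zp_vecs p m" "v' \<in> Zp_vecs p m" and eq: "v(m := c) = v'(m := c')"
  then have "v m = v' m"
    by (simp add: Zp_vecs_def)
  moreover have "v i = v' i" if "i \<noteq> m" for i
    using fun_cong [OF eq, of i] that by simp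
  ultimately have "v = v'"
    by (metis ext)
  then show "v = v' \<and> c = c'"
    using fun_cong [OF eq, of m] by simp
qed

lemma finite_Zp_vecs: "finite (Zp_vecs p m)"
  by (induction m) (auto simp: Zp_vecs_0 Zp_vecs_Suc)

lemma sum_prod_Zp_vecs:
  "(\<Sum>v\<in>Zp_vecs p m. \<Prod>i<m. g i (v i)) = (\<Prod>i<m. \<Sum>t\<in>{0..<int p}. (g i t :: complex))"
proof (induction m)
  case 0
  then show ?case by (simp add: Zp_vecs_0)
next
  case (Suc m)
  have "(\<Sum>v\<in>Zp_vecs p (Suc m). \<Prod>i<Suc m. g i (v i))
      = (\<Sum>vc\<in>Zp_vecs p m \<times> {0..<int p}. \<Prod>i<Suc m. g i (((\<lambda>(v, c). v(m := c)) vc) i))"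
    unfolding Zp_vecs_Suc by (rule sum.reindex [OF inj_on_Zp_vecs_Suc, unfolded comp_def])
  also have "\<dots> = (\<Sum>vc\<in>Zp_vecs p m \<times> {0..<int p}. (\<Prod>i<m. g i (fst vc i)) * g m (snd vc))"
    by (intro sum.cong refl) (auto intro!: prod.cong)
  also have "\<dots> = (\<Sum>v\<in>Zp_vecs p m. \<Prod>i<m. g i (v i)) * (\<Sum>c\<in>{0..<int p}. g m c)"
    by (simp add: sum.cartesian_product split_def sum_product)
  finally show ?case
    using Suc by simp
qed

lemma sum_lessThan_Suc_Suc:
  "(\<Sum>j<Suc (Suc n). f j) = f 0 + (\<Sum>j<n. f (Suc j)) + f (Suc n)"
  by (simp only: sum.lessThan_Suc [of f "Suc n"]) (simp only: sum.lessThan_Suc_shift)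

lemma heis_act_first:
  "heis_act p n (x, y, z) u 0 = (u 0 + (\<Sum>j<n. x j * u (Suc j)) + z * u (Suc n)) mod int p"
proof -
  have "(\<Sum>j<n + 2. heis_mat n (x, y, z) 0 j * u j) = u 0 + (\<Sum>j<n. x j * u (Suc j)) + z * u (Suc n)"
    by (simp only: add_2_eq_Suc' sum_lessThan_Suc_Suc) simp
  then show ?thesis
    by (simp add: heis_act_def)
qed

lemma heis_act_middle:
  assumes "1 \<le> i" "i \<le> n"
  shows "heis_act p n (x, y, z) u i = (u i + y (i - 1) * u (Suc n)) mod int p"
proof -
  have "(\<Sum>j<n. heis_mat n (x, y, z) i (Suc j) * u (Suc j)) = (\<Sum>j<n. if j = i - 1 then u i else 0)"
    using assms by (intro sum.cong) auto
  also have "\<dots> = u i"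
    using assms by simp
  finally have "(\<Sum>j<n + 2. heis_mat n (x, y, z) i j * u j) = u i + y (i - 1) * u (Suc n)"
    using assms by (simp only: add_2_eq_Suc' sum_lessThan_Suc_Suc) simp
  then show ?thesis
    using assms by (simp add: heis_act_def)
qed

lemma heis_act_last: "heis_act p n (x, y, z) u (Suc n) = u (Suc n) mod int p"
proof -
  have "(\<Sum>j<n + 2. heis_mat n (x, y, z) (Suc n) j * u j) = u (Suc n)"
    by (simp only: add_2_eq_Suc' sum_lessThan_Suc_Suc) simp
  then show ?thesis
    by (simp add: heis_act_def)
qed

lemma mod_diff_diff_add_add: "((a - b - c) mod m + b + c) mod (m::int) = a mod m"
proof -
  have "((a - b - c) mod m + b + c) mod m = ((a - b - c) + b + c) mod m"
    by (metis mod_add_left_eq add.assoc)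
  then show ?thesis by simp
qed

lemma mod_add_add_diff_diff: "((a + b + c) mod m - b - c) mod (m::int) = a mod m"
proof -
  have "((a + b + c) mod m - b - c) mod m = ((a + b + c) - b - c) mod m"
    by (metis mod_diff_left_eq diff_diff_eq)
  then show ?thesis by simp
qed

lemma heis_X_mod:
  "v \<in> heis_X p n \<Longrightarrow> v i mod int p = v i"
  by (cases "i < n + 2") (auto simp: heis_X_def Zp_vecs_def)

text \<open>Obtained by solving \<open>heis_act p n a u = v\<close> for \<open>u\<close>, from the last coordinate upwards.\<close>

fun heis_act_inv :: "nat \<Rightarrow> nat \<Rightarrow> heis_elt \<Rightarrow> (nat \<Rightarrow> int) \<Rightarrow> (nat \<Rightarrow> int)" where
  "heis_act_inv p n (x, y, z) v = (\<lambda>i.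
     if i = 0 then (v 0 - (\<Sum>j<n. x j * ((v (Suc j) - y j * v (Suc n)) mod int p)) - z * v (Suc n)) mod int p
     else if i \<le> n then (v i - y (i - 1) * v (Suc n)) mod int p
     else if i = Suc n then v (Suc n) else 0)"

lemma heis_act_inv_in_heis_X:
  "p > 0 \<Longrightarrow> v \<in> heis_X p n \<Longrightarrow> heis_act_inv p n (x, y, z) v \<in> heis_X p n"
  by (auto simp: heis_X_def Zp_vecs_def)

lemma heis_act_heis_act_inv:
  assumes "p > 0" and v: "v \<in> heis_X p n"
  shows "heis_act p n (x, y, z) (heis_act_inv p n (x, y, z) v) = v"
proof
  fix i
  let ?u = "heis_act_inv p n (x, y, z) v"
  have "(\<Sum>j<n. x j * ?u (Suc j)) = (\<Sum>j<n. x j * ((v (Suc j) - y j * v (Suc n)) mod int p))"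
    by (intro sum.cong) auto
  then have first: "heis_act p n (x, y, z) ?u 0 = v 0 mod int p"
    by (simp add: heis_act_first mod_diff_diff_add_add)
  consider "i = 0" | "1 \<le> i \<and> i \<le> n" | "i = Suc n" | "i \<ge> n + 2"
    by linarith
  then show "heis_act p n (x, y, z) ?u i = v i"
  proof cases
    case 1
    then show ?thesis using first heis_X_mod [OF v] by simp
  next
    case 2
    then show ?thesis using heis_X_mod [OF v] by (simp add: heis_act_middle mod_simps)
  next
    case 3
    then show ?thesis using heis_X_mod [OF v] by (simp add: heis_act_last)
  next
    case 4
    then show ?thesis using v by (simp add: heis_act_def heis_X_def Zp_vecs_def)
  qed
qed

lemma heis_act_inv_heis_act:
  assumes "p > 0" and u: "u \<in> heis_X p n"
  shows "heis_act_inv p n (x, y, z) (heis_act p n (x, y, z) u) = u"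
proof
  fix i
  let ?v = "heis_act p n (x, y, z) u"
  have last: "?v (Suc n) = u (Suc n)"
    using heis_X_mod [OF u] by (simp add: heis_act_last)
  have middle: "(?v (Suc j) - y j * ?v (Suc n)) mod int p = u (Suc j)" if "j < n" for j
    using that last heis_X_mod [OF u] by (simp add: heis_act_middle mod_simps)
  have "(\<Sum>j<n. x j * ((?v (Suc j) - y j * ?v (Suc n)) mod int p)) = (\<Sum>j<n. x j * u (Suc j))"
    using middle by (intro sum.cong) auto
  then have first: "heis_act_inv p n (x, y, z) ?v 0 = u 0 mod int p"
    using last by (simp add: heis_act_first mod_add_add_diff_diff)
  consider "i = 0" | "1 \<le> i \<and> i \<le> n" | "i = Suc n" | "i \<ge> n + 2"
    by linarith
  then show "heis_act_inv p n (x, y, z) ?v i = u i"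
  proof cases
    case 1
    then show ?thesis using first heis_X_mod [OF u] by simp
  next
    case 2
    then obtain j where "i = Suc j" "j < n"
      by (cases i) auto
    then show ?thesis using middle by simp
  next
    case 3
    then show ?thesis using last by simp
  next
    case 4
    then show ?thesis using u by (simp add: heis_X_def Zp_vecs_def)
  qed
qed

lemma apply_op_perm_rep_ext:
  assumes "p > 0" and "(v, k) \<in> tensor_space p n N"
  shows "apply_op (tensor_space p n N) (perm_rep_ext p n (x, y, z)) f (v, k)
       = f (heis_act_inv p n (x, y, z) v, k)"
proof -
  have v: "v \<in> heis_X p n" and k: "k < N"
    using assms(2) by (auto simp: tensor_space_def)
  let ?w = "heis_act_inv p n (x, y, z) v"
  have act_eq_iff: "v = heis_act p n (x, y, z) u \<longleftrightarrow> u = ?w" if "u \<in> heis_X p n" for u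
    using heis_act_heis_act_inv [OF assms(1) v] heis_act_inv_heis_act [OF assms(1) that] by metis
  have "apply_op (tensor_space p n N) (perm_rep_ext p n (x, y, z)) f (v, k)
      = (\<Sum>u\<in>heis_X p n. \<Sum>j<N. (if v = heis_act p n (x, y, z) u then 1 else 0) *
            (if k = j then 1 else 0) * f (u, j))"
    unfolding apply_op_def tensor_space_def perm_rep_ext_def perm_rep_def sum.cartesian_product
    by (intro sum.cong) auto
  also have "\<dots> = (\<Sum>u\<in>heis_X p n. if u = ?w then f (u, k) else 0)"
  proof (intro sum.cong refl)
    fix u assume "u \<in> heis_X p n"
    have "(\<Sum>j<N. (if v = heis_act p n (x, y, z) u then 1 else 0) * (if k = j then 1 else 0) * f (u, j))
        = (\<Sum>j<N. if j = k then (if v = heis_act p n (x, y, z) u then 1 else 0) * f (u, k) else 0)"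
      by (intro sum.cong) auto
    also have "\<dots> = (if v = heis_act p n (x, y, z) u then 1 else 0) * f (u, k)"
      using k by simp
    finally show "(\<Sum>j<N. (if v = heis_act p n (x, y, z) u then 1 else 0) * (if k = j then 1 else 0) * f (u, j))
        = (if u = ?w then f (u, k) else 0)"
      using act_eq_iff [OF \<open>u \<in> heis_X p n\<close>] by simp
  qed
  also have "\<dots> = f (?w, k)"
    using heis_act_inv_in_heis_X [OF assms(1) v] by (simp add: heis_X_def finite_Zp_vecs)
  finally show ?thesis .
qed

definition heis_mid :: "nat \<Rightarrow> nat \<Rightarrow> (nat \<Rightarrow> int) \<Rightarrow> (nat \<Rightarrow> int) \<Rightarrow> (nat \<Rightarrow> int)" where
  "heis_mid p n y v = (\<lambda>i. if i < n then (v (Suc i) - y i) mod int p else 0)"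

text \<open>\<open>heis_state p n code a\<close> is the state (\<pi>(a) \<otimes> I) \<psi> of the proof idea above, with the ancilla
  value u' stored as \<open>code u'\<close>; substituting u = a^(-1) v gives this closed form, in which
  \<open>heis_mid p n y v\<close> = v' - y is the middle part of a^(-1) v.\<close>

definition heis_state ::
    "nat \<Rightarrow> nat \<Rightarrow> ((nat \<Rightarrow> int) \<Rightarrow> nat) \<Rightarrow> heis_elt \<Rightarrow> (nat \<Rightarrow> int) \<times> nat \<Rightarrow> complex" where
  "heis_state p n code a s = (case a of (x, y, z) \<Rightarrow> case s of (v, k) \<Rightarrow>
     if v (Suc n) = 1 \<and> k = code (heis_mid p n y v)
     then unit_root p (v 0 - (\<Sum>j<n. x j * heis_mid p n y v j) - z) / of_real (sqrt (real p ^ Suc n))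
     else 0)"

lemma heis_mid_in_Zp_vecs: "p > 0 \<Longrightarrow> heis_mid p n y v \<in> Zp_vecs p n"
  by (simp add: heis_mid_def Zp_vecs_def)

lemma heis_mid_eq_iff:
  assumes "ya \<in> Zp_vecs p n" and "yb \<in> Zp_vecs p n"
  shows "heis_mid p n ya v = heis_mid p n yb v \<longleftrightarrow> ya = yb"
proof
  assume eq: "heis_mid p n ya v = heis_mid p n yb v"
  have "ya i = yb i" if "i < n" for i
  proof -
    have "(v (Suc i) - ya i) mod int p = (v (Suc i) - yb i) mod int p"
      using fun_cong [OF eq, of i] that by (simp add: heis_mid_def)
    then have "(v (Suc i) - (v (Suc i) - ya i) mod int p) mod int p
        = (v (Suc i) - (v (Suc i) - yb i) mod int p) mod int p"
      by simp
    then have "ya i mod int p = yb i mod int p"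
      by (simp add: mod_diff_right_eq)
    then show ?thesis
      using assms that by (simp add: Zp_vecs_def)
  qed
  then show "ya = yb"
    using Zp_vecs_eq_iff [OF assms] by blast
qed simp

lemma heis_state_zero_act_inv:
  assumes "p > 0"
  shows "heis_state p n code ((\<lambda>_. 0), (\<lambda>_. 0), 0) (heis_act_inv p n (x, y, z) v, k)
       = heis_state p n code (x, y, z) (v, k)"
proof (cases "v (Suc n) = 1")
  case True
  let ?w = "heis_act_inv p n (x, y, z) v"
  have mid: "heis_mid p n (\<lambda>_. 0) ?w = heis_mid p n y v"
    using True by (auto simp: heis_mid_def)
  have "(\<Sum>j<n. x j * ((v (Suc j) - y j * v (Suc n)) mod int p)) = (\<Sum>j<n. x j * heis_mid p n y v j)"
    using True by (intro sum.cong) (auto simp: heis_mid_def)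
  then have "?w 0 = (v 0 - (\<Sum>j<n. x j * heis_mid p n y v j) - z) mod int p"
    using True by simp
  then have "unit_root p (?w 0) = unit_root p (v 0 - (\<Sum>j<n. x j * heis_mid p n y v j) - z)"
    using unit_root_mod [OF assms] by simp
  then show ?thesis
    using True mid by (simp add: heis_state_def)
qed (simp add: heis_state_def)

lemma prod_lessThan_Suc_Suc:
  "(\<Prod>j<Suc (Suc n). f j) = f 0 * (\<Prod>j<n. f (Suc j)) * f (Suc n)"
  by (simp only: prod.lessThan_Suc [of f "Suc n"]) (simp only: prod.lessThan_Suc_shift)

text \<open>The sum factors coordinatewise over \<open>X = \<int>\<^sub>p\<^sup>n\<^sup>+\<^sup>2\<close>.\<close>

lemma sum_heis_X_character:
  assumes "1 < p" and xa: "xa \<in> Zp_vecs p n" and xb: "xb \<in> Zp_vecs p n"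
  shows "(\<Sum>v\<in>heis_X p n. if v (Suc n) = 1
            then unit_root p (\<Sum>j<n. (xa j - xb j) * heis_mid p n y v j) else 0)
       = (if xa = xb then of_nat p ^ Suc n else 0)"
proof -
  define d where "d j = xa j - xb j" for j
  define g where "g i t = (if i = 0 then 1 else if i = Suc n then (if t = 1 then 1 else 0)
      else unit_root p (d (i - 1) * ((t - y (i - 1)) mod int p)))" for i t
  have factor: "(if v (Suc n) = 1 then unit_root p (\<Sum>j<n. d j * heis_mid p n y v j) else 0)
      = (\<Prod>i<n + 2. g i (v i))" for v
    unfolding add_2_eq_Suc' prod_lessThan_Suc_Suc
    by (simp add: g_def unit_root_sum heis_mid_def)
  have middle: "(\<Sum>t\<in>{0..<int p}. g (Suc j) t) = (if xa j = xb j then of_nat p else 0)"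
    if "j < n" for j
  proof -
    have "0 \<le> xa j" "xa j < int p" "0 \<le> xb j" "xb j < int p"
      using xa xb that unfolding Zp_vecs_def by auto
    then have "\<bar>d j\<bar> < int p"
      unfolding d_def by linarith
    then show ?thesis
      using that assms(1) sum_unit_root_shifted [of p] by (simp add: g_def d_def)
  qed
  have "(\<Prod>j<n. \<Sum>t\<in>{0..<int p}. g (Suc j) t) = (\<Prod>j<n. if xa j = xb j then of_nat p else 0)"
    using middle by (intro prod.cong) auto
  also have "\<dots> = (if xa = xb then of_nat p ^ n else 0)"
    using Zp_vecs_eq_iff [OF xa xb] by auto
  finally have "(\<Prod>i<n + 2. \<Sum>t\<in>{0..<int p}. g i t) = (if xa = xb then of_nat p ^ Suc n else 0)"
    unfolding add_2_eq_Suc' prod_lessThan_Suc_Suc using assms(1) by (simp add: g_def)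
  then show ?thesis
    unfolding d_def [symmetric] factor heis_X_def sum_prod_Zp_vecs .
qed

lemma inner_heis_state:
  assumes p: "1 < p"
    and code: "inj_on code (Zp_vecs p n)" "code ` Zp_vecs p n \<subseteq> {..<N}"
    and xa: "xa \<in> Zp_vecs p n" and ya: "ya \<in> Zp_vecs p n"
    and xb: "xb \<in> Zp_vecs p n" and yb: "yb \<in> Zp_vecs p n"
  shows "inner_c (tensor_space p n N) (heis_state p n code (xa, ya, za)) (heis_state p n code (xb, yb, zb))
       = (if xa = xb \<and> ya = yb then unit_root p (za - zb) else 0)"
proof -
  have mid: "heis_mid p n y v \<in> Zp_vecs p n" for y v
    using p heis_mid_in_Zp_vecs by simp
  define A where "A v = unit_root p (v 0 - (\<Sum>j<n. xa j * heis_mid p n ya v j) - za)" for v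
  define B where "B v = unit_root p (v 0 - (\<Sum>j<n. xb j * heis_mid p n yb v j) - zb)" for v
  define c :: complex where "c = of_real (sqrt (real p ^ Suc n))"
  have c: "cnj c = c" "c * c = of_nat p ^ Suc n"
    unfolding c_def of_real_mult [symmetric] real_sqrt_mult_self by (simp_all add: of_real_power)
  have code_eq: "code (heis_mid p n ya v) = code (heis_mid p n yb v) \<longleftrightarrow> ya = yb" for v
    using inj_on_eq_iff [OF code(1) mid mid] heis_mid_eq_iff [OF ya yb] by simp
  have fibre: "(\<Sum>k<N. cnj (heis_state p n code (xa, ya, za) (v, k)) * heis_state p n code (xb, yb, zb) (v, k))
      = (if v (Suc n) = 1 \<and> ya = yb then cnj (A v) * B v / of_nat p ^ Suc n else 0)" for v
  proof -
    let ?k = "code (heis_mid p n ya v)"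
    have "?k < N"
      using code(2) mid by blast
    have "(\<Sum>k<N. cnj (heis_state p n code (xa, ya, za) (v, k)) * heis_state p n code (xb, yb, zb) (v, k))
        = (\<Sum>k<N. if k = ?k then (if v (Suc n) = 1 \<and> ya = yb then cnj (A v / c) * (B v / c) else 0) else 0)"
      using code_eq by (intro sum.cong) (auto simp: heis_state_def A_def B_def c_def)
    also have "\<dots> = (if v (Suc n) = 1 \<and> ya = yb then cnj (A v) * B v / of_nat p ^ Suc n else 0)"
      using \<open>?k < N\<close> c by simp
    finally show ?thesis .
  qed
  have phase: "cnj (A v) * B v = unit_root p (za - zb) * unit_root p (\<Sum>j<n. (xa j - xb j) * heis_mid p n ya v j)"
    if "ya = yb" for v
    unfolding A_def B_def cnj_unit_root unit_root_add [symmetric] using that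
    by (simp add: sum_subtractf algebra_simps)
  have "inner_c (tensor_space p n N) (heis_state p n code (xa, ya, za)) (heis_state p n code (xb, yb, zb))
      = (\<Sum>v\<in>heis_X p n. \<Sum>k<N. cnj (heis_state p n code (xa, ya, za) (v, k))
            * heis_state p n code (xb, yb, zb) (v, k))"
    unfolding inner_c_def tensor_space_def sum.cartesian_product by (intro sum.cong) auto
  also have "\<dots> = (if ya = yb then unit_root p (za - zb) / of_nat p ^ Suc n * (\<Sum>v\<in>heis_X p n.
          if v (Suc n) = 1 then unit_root p (\<Sum>j<n. (xa j - xb j) * heis_mid p n ya v j) else 0) else 0)"
  proof (cases "ya = yb")
    case True
    then show ?thesis
      unfolding fibre using phase by (auto simp: sum_distrib_left intro!: sum.cong)
  qed (simp add: fibre)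
  also have "\<dots> = (if xa = xb \<and> ya = yb then unit_root p (za - zb) else 0)"
    using p by (simp add: sum_heis_X_character [OF p xa xb])
  finally show ?thesis .
qed

lemma finite_heis_group: "finite (heis_group p n)"
proof -
  have "heis_group p n = Zp_vecs p n \<times> Zp_vecs p n \<times> {0..<int p}"
    by (auto simp: heis_group_def)
  then show ?thesis
    by (simp add: finite_Zp_vecs)
qed

lemma zero_in_heis_group: "p > 0 \<Longrightarrow> ((\<lambda>_. 0), (\<lambda>_. 0), 0) \<in> heis_group p n"
  by (simp add: heis_group_def zero_in_Zp_vecs)

lemma heis_coset_eq:
  assumes "p > 0" and "(x, y, z) \<in> heis_group p n"
  shows "heis_coset p n (x, y, z) = {(x, y, w) | w. w \<in> {0..<int p}}"
proof -
  have x: "(\<lambda>i. if i < n then (x i + 0) mod int p else 0) = x"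
    and y: "(\<lambda>i. if i < n then (y i + 0) mod int p else 0) = y"
    using assms(2) by (auto simp: heis_group_def Zp_vecs_def)
  have "heis_coset p n (x, y, z) = (\<lambda>w. (x, y, (z + w) mod int p)) ` {0..<int p}"
    unfolding heis_coset_def heis_center_def by (auto simp: x y image_iff)
  also have "\<dots> = {(x, y, w) | w. w \<in> {0..<int p}}"
  proof (intro set_eqI iffI)
    fix b assume "b \<in> {(x, y, w) | w. w \<in> {0..<int p}}"
    then obtain w where b: "b = (x, y, w)" and w: "w \<in> {0..<int p}"
      by blast
    then have "b = (x, y, (z + (w - z) mod int p) mod int p)"
      by (simp add: mod_add_right_eq)
    moreover have "(w - z) mod int p \<in> {0..<int p}"
      using assms(1) by simp
    ultimately show "b \<in> (\<lambda>w. (x, y, (z + w) mod int p)) ` {0..<int p}"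
      by blast
  qed (use assms(1) in auto)
  finally show ?thesis .
qed

lemma heis_coset_eq_iff:
  assumes "p > 0" and "(x, y, z) \<in> heis_group p n" and "(x', y', z') \<in> heis_group p n"
  shows "heis_coset p n (x, y, z) = heis_coset p n (x', y', z') \<longleftrightarrow> x = x' \<and> y = y'"
proof -
  have "0 \<in> {0..<int p}"
    using assms(1) by simp
  then show ?thesis
    unfolding heis_coset_eq [OF assms(1,2)] heis_coset_eq [OF assms(1,3)] by blast
qed

lemma inner_heis_state_heis_coset:
  assumes "1 < p"
    and code: "inj_on code (Zp_vecs p n)" "code ` Zp_vecs p n \<subseteq> {..<N}"
    and "a \<in> heis_group p n" and "b \<in> heis_group p n"
  shows "inner_c (tensor_space p n N) (heis_state p n code a) (heis_state p n code b)
       = (if heis_coset p n a = heis_coset p n b then unit_root p (snd (snd a) - snd (snd b)) else 0)"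
proof -
  obtain xa ya za xb yb zb where "a = (xa, ya, za)" "b = (xb, yb, zb)"
    by (cases a, cases b)
  then show ?thesis
    using assms inner_heis_state [OF assms(1-3)] heis_coset_eq_iff [of p xa ya za n xb yb zb]
    by (simp add: heis_group_def)
qed

lemma heis_state_query:
  assumes "p > 0" and "s \<in> tensor_space p n N"
  shows "apply_op (tensor_space p n N) (perm_rep_ext p n a) (heis_state p n code ((\<lambda>_. 0), (\<lambda>_. 0), 0)) s
       = heis_state p n code a s"
  using assms apply_op_perm_rep_ext heis_state_zero_act_inv
  by (cases a, cases s) simp

lemma sum_delta_left:
  "finite S \<Longrightarrow> s \<in> S \<Longrightarrow> (\<Sum>t\<in>S. (if s = t then 1 else 0) * f t) = (f s :: complex)"
  by (subst sum.cong [OF refl, where h = "\<lambda>t. if s = t then f t else 0"]) auto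

lemma apply_op_id:
  "finite S \<Longrightarrow> s \<in> S \<Longrightarrow> apply_op S (\<lambda>s t. if s = t then 1 else 0) f s = f s"
  unfolding apply_op_def by (rule sum_delta_left)

lemma is_unitary_id:
  assumes "finite S"
  shows "is_unitary S (\<lambda>s t. if s = t then 1 else 0)"
  unfolding is_unitary_def
proof (intro ballI)
  fix s t assume "s \<in> S"
  have "(\<Sum>k\<in>S. cnj (if k = s then 1 else 0) * (if k = t then 1 else 0))
      = (\<Sum>k\<in>S. if k = s then (if s = t then 1 else 0) else 0)"
    by (intro sum.cong) auto
  also have "\<dots> = (if s = t then 1 else 0)"
    using assms \<open>s \<in> S\<close> by simp
  finally show "(\<Sum>k\<in>S. cnj (if k = s then 1 else 0) * (if k = t then 1 else 0)) = (if s = t then 1 else 0)" .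
qed

lemma cnj_mult_self: "cnj z * z = complex_of_real ((cmod z)\<^sup>2)"
  by (metis complex_mult_cnj cmod_power2 mult.commute)

lemma inner_c_self: "inner_c S f f = complex_of_real (\<Sum>s\<in>S. (cmod (f s))\<^sup>2)"
  unfolding inner_c_def of_real_sum by (intro sum.cong refl cnj_mult_self)

lemma inner_c_commute: "inner_c S f g = cnj (inner_c S g f)"
  unfolding inner_c_def by (simp add: cnj_sum mult.commute)

lemma inner_c_diff_left: "inner_c S (\<lambda>s. a s - b s) h = inner_c S a h - inner_c S b h"
  unfolding inner_c_def by (simp add: left_diff_distrib sum_subtractf)

lemma inner_c_diff_right: "inner_c S h (\<lambda>s. a s - b s) = inner_c S h a - inner_c S h b"
  unfolding inner_c_def by (simp add: right_diff_distrib sum_subtractf)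

lemma inner_c_sum_left:
  "inner_c S (\<lambda>s. \<Sum>i\<in>I. c i * \<phi> i s) h = (\<Sum>i\<in>I. cnj (c i) * inner_c S (\<phi> i) h)"
proof -
  have "inner_c S (\<lambda>s. \<Sum>i\<in>I. c i * \<phi> i s) h = (\<Sum>s\<in>S. \<Sum>i\<in>I. cnj (c i) * (cnj (\<phi> i s) * h s))"
    unfolding inner_c_def by (simp add: cnj_sum sum_distrib_right mult.assoc)
  also have "\<dots> = (\<Sum>i\<in>I. cnj (c i) * inner_c S (\<phi> i) h)"
    unfolding inner_c_def by (subst sum.swap) (simp add: sum_distrib_left)
  finally show ?thesis .
qed

lemma inner_c_sum_right:
  "inner_c S h (\<lambda>s. \<Sum>i\<in>I. c i * \<phi> i s) = (\<Sum>i\<in>I. c i * inner_c S h (\<phi> i))"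
proof -
  have "inner_c S h (\<lambda>s. \<Sum>i\<in>I. c i * \<phi> i s) = (\<Sum>s\<in>S. \<Sum>i\<in>I. c i * (cnj (h s) * \<phi> i s))"
    unfolding inner_c_def by (simp add: sum_distrib_left mult.left_commute)
  also have "\<dots> = (\<Sum>i\<in>I. c i * inner_c S h (\<phi> i))"
    unfolding inner_c_def by (subst sum.swap) (simp add: sum_distrib_left)
  finally show ?thesis .
qed

lemma inner_c_apply_op_add:
  "inner_c S f (apply_op S (\<lambda>s t. A s t + B s t) f)
     = inner_c S f (apply_op S A f) + inner_c S f (apply_op S B f)"
  unfolding inner_c_def apply_op_def by (simp add: distrib_left distrib_right sum.distrib)

lemma inner_c_apply_op_cong:
  "(\<And>s. s \<in> S \<Longrightarrow> f s = g s) \<Longrightarrow> inner_c S f (apply_op S M f) = inner_c S g (apply_op S M g)"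
  unfolding inner_c_def apply_op_def by (intro sum.cong refl) simp_all

lemma inner_c_apply_op_rank_one:
  "inner_c S f (apply_op S (\<lambda>s t. \<phi> s * cnj (\<phi> t)) f) = cnj (inner_c S \<phi> f) * inner_c S \<phi> f"
proof -
  have "inner_c S f (apply_op S (\<lambda>s t. \<phi> s * cnj (\<phi> t)) f)
      = (\<Sum>s\<in>S. cnj (f s) * \<phi> s * (\<Sum>t\<in>S. cnj (\<phi> t) * f t))"
    unfolding inner_c_def apply_op_def by (simp add: sum_distrib_left mult.assoc)
  also have "\<dots> = (\<Sum>s\<in>S. cnj (f s) * \<phi> s) * (\<Sum>t\<in>S. cnj (\<phi> t) * f t)"
    by (simp add: sum_distrib_right)
  also have "(\<Sum>s\<in>S. cnj (f s) * \<phi> s) = cnj (inner_c S \<phi> f)"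
    unfolding inner_c_def by (simp add: mult.commute)
  finally show ?thesis
    unfolding inner_c_def .
qed

lemma inner_c_apply_op_complement:
  assumes "finite S"
  shows "inner_c S f (apply_op S (\<lambda>s t. (if s = t then 1 else 0) - (\<Sum>i\<in>I. \<phi> i s * cnj (\<phi> i t))) f)
       = inner_c S f f - (\<Sum>i\<in>I. cnj (inner_c S (\<phi> i) f) * inner_c S (\<phi> i) f)"
proof -
  have "apply_op S (\<lambda>s t. (if s = t then 1 else 0) - (\<Sum>i\<in>I. \<phi> i s * cnj (\<phi> i t))) f s
      = f s - (\<Sum>i\<in>I. inner_c S (\<phi> i) f * \<phi> i s)" if "s \<in> S" for s
  proof -
    have "apply_op S (\<lambda>s t. (if s = t then 1 else 0) - (\<Sum>i\<in>I. \<phi> i s * cnj (\<phi> i t))) f s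
        = (\<Sum>t\<in>S. (if s = t then 1 else 0) * f t) - (\<Sum>t\<in>S. \<Sum>i\<in>I. \<phi> i s * (cnj (\<phi> i t) * f t))"
      unfolding apply_op_def by (simp add: left_diff_distrib sum_subtractf sum_distrib_right mult.assoc)
    also have "(\<Sum>t\<in>S. \<Sum>i\<in>I. \<phi> i s * (cnj (\<phi> i t) * f t)) = (\<Sum>i\<in>I. inner_c S (\<phi> i) f * \<phi> i s)"
      unfolding inner_c_def by (subst sum.swap) (simp add: sum_distrib_left mult.commute)
    finally show ?thesis
      using sum_delta_left [OF assms that] by simp
  qed
  then have "inner_c S f (apply_op S (\<lambda>s t. (if s = t then 1 else 0) - (\<Sum>i\<in>I. \<phi> i s * cnj (\<phi> i t))) f)
      = inner_c S f (\<lambda>s. f s - (\<Sum>i\<in>I. inner_c S (\<phi> i) f * \<phi> i s))"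
    unfolding inner_c_def [of S f] by (intro sum.cong) auto
  also have "\<dots> = inner_c S f f - (\<Sum>i\<in>I. inner_c S (\<phi> i) f * inner_c S f (\<phi> i))"
    by (simp only: inner_c_diff_right inner_c_sum_right)
  also have "\<dots> = inner_c S f f - (\<Sum>i\<in>I. cnj (inner_c S (\<phi> i) f) * inner_c S (\<phi> i) f)"
    by (subst inner_c_commute [of S f]) (simp add: mult.commute)
  finally show ?thesis .
qed

lemma bessel_identity:
  assumes "finite I"
    and orth: "\<And>i j. i \<in> I \<Longrightarrow> j \<in> I \<Longrightarrow> inner_c S (\<phi> i) (\<phi> j) = (if i = j then 1 else 0)"
  shows "inner_c S f f - (\<Sum>i\<in>I. cnj (inner_c S (\<phi> i) f) * inner_c S (\<phi> i) f)
       = complex_of_real (\<Sum>s\<in>S. (cmod (f s - (\<Sum>i\<in>I. inner_c S (\<phi> i) f * \<phi> i s)))\<^sup>2)"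
proof -
  define \<alpha> where "\<alpha> i = inner_c S (\<phi> i) f" for i
  define g where "g = (\<lambda>s. f s - (\<Sum>i\<in>I. \<alpha> i * \<phi> i s))"
  have "inner_c S g (\<phi> j) = 0" if "j \<in> I" for j
  proof -
    have "(\<Sum>i\<in>I. cnj (\<alpha> i) * inner_c S (\<phi> i) (\<phi> j)) = (\<Sum>i\<in>I. if i = j then cnj (\<alpha> j) else 0)"
      using orth that by (intro sum.cong) auto
    then have "(\<Sum>i\<in>I. cnj (\<alpha> i) * inner_c S (\<phi> i) (\<phi> j)) = cnj (\<alpha> j)"
      using that assms(1) by simp
    moreover have "inner_c S f (\<phi> j) = cnj (\<alpha> j)"
      unfolding \<alpha>_def by (rule inner_c_commute)
    ultimately show ?thesis
      unfolding g_def inner_c_diff_left inner_c_sum_left by simp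
  qed
  then have "inner_c S g g = inner_c S g f"
    by (subst (2) g_def) (simp add: inner_c_diff_right inner_c_sum_right)
  also have "\<dots> = inner_c S f f - (\<Sum>i\<in>I. cnj (\<alpha> i) * \<alpha> i)"
    unfolding g_def inner_c_diff_left inner_c_sum_left \<alpha>_def ..
  finally show ?thesis
    unfolding inner_c_self g_def \<alpha>_def by simp
qed

text \<open>The rank-one projections onto the \<open>\<phi> c\<close>, with the projection onto the orthogonal
  complement of their span added to the outcome \<open>c\<^sub>0\<close>.\<close>

definition orthonormal_povm ::
    "'s set \<Rightarrow> 'c set \<Rightarrow> 'c \<Rightarrow> ('c \<Rightarrow> 's \<Rightarrow> complex) \<Rightarrow> 'c \<Rightarrow> 's \<Rightarrow> 's \<Rightarrow> complex" where
  "orthonormal_povm S C c\<^sub>0 \<phi> c s t = \<phi> c s * cnj (\<phi> c t) +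
     (if c = c\<^sub>0 then (if s = t then 1 else 0) - (\<Sum>d\<in>C. \<phi> d s * cnj (\<phi> d t)) else 0)"

lemma inner_c_orthonormal_povm:
  assumes "finite S"
  shows "inner_c S f (apply_op S (orthonormal_povm S C c\<^sub>0 \<phi> c) f)
       = cnj (inner_c S (\<phi> c) f) * inner_c S (\<phi> c) f +
         (if c = c\<^sub>0 then inner_c S f f - (\<Sum>d\<in>C. cnj (inner_c S (\<phi> d) f) * inner_c S (\<phi> d) f) else 0)"
proof (cases "c = c\<^sub>0")
  case True
  then have "orthonormal_povm S C c\<^sub>0 \<phi> c
      = (\<lambda>s t. \<phi> c s * cnj (\<phi> c t) + ((if s = t then 1 else 0) - (\<Sum>d\<in>C. \<phi> d s * cnj (\<phi> d t))))"
    by (intro ext) (simp add: orthonormal_povm_def)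
  then show ?thesis
    using True by (simp only: inner_c_apply_op_add inner_c_apply_op_rank_one
        inner_c_apply_op_complement [OF assms]) simp
next
  case False
  then have "orthonormal_povm S C c\<^sub>0 \<phi> c = (\<lambda>s t. \<phi> c s * cnj (\<phi> c t))"
    by (intro ext) (simp add: orthonormal_povm_def)
  then show ?thesis
    using False by (simp add: inner_c_apply_op_rank_one)
qed

lemma is_povm_orthonormal_povm:
  assumes S: "finite S" and C: "finite C" "c\<^sub>0 \<in> C"
    and orth: "\<And>c d. c \<in> C \<Longrightarrow> d \<in> C \<Longrightarrow> inner_c S (\<phi> c) (\<phi> d) = (if c = d then 1 else 0)"
  shows "is_povm S C (orthonormal_povm S C c\<^sub>0 \<phi>)"
  unfolding is_povm_def
proof (intro conjI ballI)
  fix c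
  show "is_psd S (orthonormal_povm S C c\<^sub>0 \<phi> c)"
    unfolding is_psd_def
  proof
    fix f
    have "inner_c S f f - (\<Sum>d\<in>C. cnj (inner_c S (\<phi> d) f) * inner_c S (\<phi> d) f)
        = complex_of_real (\<Sum>s\<in>S. (cmod (f s - (\<Sum>d\<in>C. inner_c S (\<phi> d) f * \<phi> d s)))\<^sup>2)"
      using bessel_identity [OF C(1) orth] .
    moreover have "cnj (inner_c S (\<phi> c) f) * inner_c S (\<phi> c) f = complex_of_real ((cmod (inner_c S (\<phi> c) f))\<^sup>2)"
      by (rule cnj_mult_self)
    ultimately show "Im (inner_c S f (apply_op S (orthonormal_povm S C c\<^sub>0 \<phi> c) f)) = 0 \<and>
        Re (inner_c S f (apply_op S (orthonormal_povm S C c\<^sub>0 \<phi> c) f)) \<ge> 0"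
      unfolding inner_c_orthonormal_povm [OF S] by (auto intro!: add_nonneg_nonneg sum_nonneg)
  qed
next
  fix s t
  show "(\<Sum>c\<in>C. orthonormal_povm S C c\<^sub>0 \<phi> c s t) = (if s = t then 1 else 0)"
    using C by (simp add: orthonormal_povm_def sum.distrib)
qed

lemma inner_c_orthonormal_povm_eq_1:
  assumes "finite S" "finite C" "c \<in> C" "is_unit_vec S f"
    and "\<And>d. d \<in> C \<Longrightarrow> cnj (inner_c S (\<phi> d) f) * inner_c S (\<phi> d) f = (if d = c then 1 else 0)"
  shows "inner_c S f (apply_op S (orthonormal_povm S C c\<^sub>0 \<phi> c) f) = 1"
proof -
  have "(\<Sum>d\<in>C. cnj (inner_c S (\<phi> d) f) * inner_c S (\<phi> d) f) = 1"
    using assms(2,3,5) by simp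
  then show ?thesis
    using assms(1,3-5) by (cases "c = c\<^sub>0") (simp_all add: inner_c_orthonormal_povm is_unit_vec_def)
qed

lemma finite_tensor_space: "finite (tensor_space p n N)"
  by (simp add: tensor_space_def heis_X_def finite_Zp_vecs)

lemma finite_heis_cosets: "finite (heis_cosets p n)"
  by (simp add: heis_cosets_def finite_heis_group)

definition heis_coset_rep :: "nat \<Rightarrow> nat \<Rightarrow> heis_elt set \<Rightarrow> heis_elt" where
  "heis_coset_rep p n C = (SOME a. a \<in> heis_group p n \<and> heis_coset p n a = C)"

lemma heis_coset_rep:
  assumes "C \<in> heis_cosets p n"
  shows "heis_coset_rep p n C \<in> heis_group p n" and "heis_coset p n (heis_coset_rep p n C) = C"
proof -
  obtain a where "a \<in> heis_group p n \<and> heis_coset p n a = C"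
    using assms unfolding heis_cosets_def by blast
  then have "heis_coset_rep p n C \<in> heis_group p n \<and> heis_coset p n (heis_coset_rep p n C) = C"
    unfolding heis_coset_rep_def by (rule someI)
  then show "heis_coset_rep p n C \<in> heis_group p n" and "heis_coset p n (heis_coset_rep p n C) = C"
    by blast+
qed

lemma is_unit_vec_heis_state:
  assumes "1 < p"
    and "inj_on code (Zp_vecs p n)" "code ` Zp_vecs p n \<subseteq> {..<N}"
    and "a \<in> heis_group p n"
  shows "is_unit_vec (tensor_space p n N) (heis_state p n code a)"
  unfolding is_unit_vec_def using inner_heis_state_heis_coset [OF assms assms(4)] by simp

lemma inner_heis_state_heis_coset_rep:
  assumes "1 < p"
    and code: "inj_on code (Zp_vecs p n)" "code ` Zp_vecs p n \<subseteq> {..<N}"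
    and "C \<in> heis_cosets p n" and "a \<in> heis_group p n"
  shows "cnj (inner_c (tensor_space p n N) (heis_state p n code (heis_coset_rep p n C)) (heis_state p n code a))
           * inner_c (tensor_space p n N) (heis_state p n code (heis_coset_rep p n C)) (heis_state p n code a)
       = (if C = heis_coset p n a then 1 else 0)"
  using inner_heis_state_heis_coset [OF assms(1-3) heis_coset_rep(1) [OF assms(4)] assms(5)]
    heis_coset_rep(2) [OF assms(4)] by (simp add: cnj_unit_root_mult_self)

lemma orthonormal_heis_coset_rep_states:
  assumes "1 < p"
    and code: "inj_on code (Zp_vecs p n)" "code ` Zp_vecs p n \<subseteq> {..<N}"
    and C: "C \<in> heis_cosets p n" and D: "D \<in> heis_cosets p n"
  shows "inner_c (tensor_space p n N) (heis_state p n code (heis_coset_rep p n C))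
           (heis_state p n code (heis_coset_rep p n D)) = (if C = D then 1 else 0)"
  using inner_heis_state_heis_coset [OF assms(1-3) heis_coset_rep(1) [OF C] heis_coset_rep(1) [OF D]]
    heis_coset_rep(2) [OF C] heis_coset_rep(2) [OF D] by simp

lemma success_prob_heis_state:
  assumes "p > 0"
    and perfect: "\<And>a. a \<in> heis_group p n \<Longrightarrow> inner_c (tensor_space p n N) (heis_state p n code a)
           (apply_op (tensor_space p n N) (E (heis_coset p n a)) (heis_state p n code a)) = 1"
  shows "success_prob p n N (heis_state p n code ((\<lambda>_. 0), (\<lambda>_. 0), 0)) (\<lambda>s t. if s = t then 1 else 0) E = 1"
proof -
  let ?S = "tensor_space p n N"
  let ?\<psi> = "\<lambda>a. apply_op ?S (\<lambda>s t. if s = t then 1 else 0)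
      (apply_op ?S (perm_rep_ext p n a) (heis_state p n code ((\<lambda>_. 0), (\<lambda>_. 0), 0)))"
  have "?\<psi> a s = heis_state p n code a s" if "s \<in> ?S" for a s
    using apply_op_id [OF finite_tensor_space that] heis_state_query [OF assms(1) that] by simp
  then have "inner_c ?S (?\<psi> a) (apply_op ?S (E (heis_coset p n a)) (?\<psi> a)) = 1"
    if "a \<in> heis_group p n" for a
    using perfect [OF that] inner_c_apply_op_cong [of ?S "?\<psi> a" "heis_state p n code a"] by simp
  then have "success_prob p n N (heis_state p n code ((\<lambda>_. 0), (\<lambda>_. 0), 0)) (\<lambda>s t. if s = t then 1 else 0) E
      = 1 / of_nat (card (heis_group p n)) * (\<Sum>a\<in>heis_group p n. 1)"
    unfolding success_prob_def Let_def by (intro arg_cong2 [where f = "(*)"] sum.cong) auto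
  also have "\<dots> = 1"
    using card_gt_0_iff [of "heis_group p n"] finite_heis_group zero_in_heis_group [OF assms(1)] by auto
  finally show ?thesis .
qed

theorem theorem20:
  fixes p n :: nat
  assumes "prime p" and "n \<ge> 1"
  shows "\<exists>N psi U E. N \<ge> 1 \<and>
           is_unit_vec (tensor_space p n N) psi \<and>
           is_unitary (tensor_space p n N) U \<and>
           is_povm (tensor_space p n N) (heis_cosets p n) E \<and>
           success_prob p n N psi U E = 1"
proof -
  have p: "1 < p" "0 < p"
    using assms(1) prime_gt_1_nat prime_gt_0_nat by auto
  define N where "N = card (Zp_vecs p n)"
  obtain code where "bij_betw code (Zp_vecs p n) {0..<N}"
    unfolding N_def using ex_bij_betw_finite_nat [OF finite_Zp_vecs] by blast
  then have code: "inj_on code (Zp_vecs p n)" "code ` Zp_vecs p n \<subseteq> {..<N}"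
    by (auto simp: bij_betw_def)
  define e :: heis_elt where "e = ((\<lambda>_. 0), (\<lambda>_. 0), 0)"
  define E where "E = orthonormal_povm (tensor_space p n N) (heis_cosets p n) (heis_coset p n e)
    (\<lambda>C. heis_state p n code (heis_coset_rep p n C))"
  have e: "e \<in> heis_group p n"
    unfolding e_def using zero_in_heis_group [OF p(2)] .
  have perfect: "inner_c (tensor_space p n N) (heis_state p n code a)
      (apply_op (tensor_space p n N) (E (heis_coset p n a)) (heis_state p n code a)) = 1"
    if "a \<in> heis_group p n" for a
    unfolding E_def using that finite_tensor_space finite_heis_cosets is_unit_vec_heis_state [OF p(1) code]
      inner_heis_state_heis_coset_rep [OF p(1) code]
    by (intro inner_c_orthonormal_povm_eq_1) (auto simp: heis_cosets_def)
  show ?thesis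
  proof (intro exI conjI)
    show "N \<ge> 1"
      unfolding N_def using zero_in_Zp_vecs [OF p(2)]
      by (auto simp: Suc_le_eq card_gt_0_iff finite_Zp_vecs)
    show "is_unit_vec (tensor_space p n N) (heis_state p n code e)"
      using is_unit_vec_heis_state [OF p(1) code e] .
    show "is_unitary (tensor_space p n N) (\<lambda>s t. if s = t then 1 else 0)"
      using finite_tensor_space by (rule is_unitary_id)
    show "is_povm (tensor_space p n N) (heis_cosets p n) E"
      unfolding E_def
    proof (rule is_povm_orthonormal_povm [OF finite_tensor_space finite_heis_cosets])
      show "heis_coset p n e \<in> heis_cosets p n"
        unfolding heis_cosets_def using e by blast
    qed (rule orthonormal_heis_coset_rep_states [OF p(1) code])
    show "success_prob p n N (heis_state p n code e) (\<lambda>s t. if s = t then 1 else 0) E = 1"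
      unfolding e_def using success_prob_heis_state [OF p(2) perfect] .
  qed
qed

end
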